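(* Let $H$ be a connected graph, $\{G_n\}$ a sequence of graphs, $p_n\in(0,1)$ with $\limsup_np_n<1$, and $\mathrm{Var}[T(H,G_n)]>0$ for all $n$. Fix $M>0$ and an integer $R\ge1$. Then $$\limsup_{n\to\infty}\left|\mathbb E\left[\left(\frac{T_M^\circ(H,G_n)-\mathbb E[T_M^\circ(H,G_n)]}{\sqrt{\mathrm{Var}[T(H,G_n)]}}\right)^R\right]\right|\lesssim_{H,M,R}1.$$
   Context: $G_n$ is a simple labeled graph on $V(G_n)=\{1,\dots,|V(G_n)|\}$ with adjacency $(a_{ij})$; $H=(V(H),E(H))$ with $|Aut(H)|$ automorphisms. $V(G_n)_k$ is the set of $k$-tuples of distinct vertices, $\bar{\mathbf s}$ the set of entries. $M_H(\mathbf s)=\prod_{(i,j)\in E(H)}a_{s_is_j}$, $t_H(A)=\frac1{|Aut(H)|}\sum_{\mathbf s:\bar{\mathbf s}\supseteq A}M_H(\mathbf s)$. $\{X_v\}$ i.i.d. Bernoulli$(p_n)$, $X_{\mathbf s}=\prod_uX_{s_u}$, $T(H,G_n)=\frac1{|Aut(H)|}\sum_{\mathbf s}M_H(\mathbf s)X_{\mathbf s}$. For $M>0$, $\mathcal C_M(A)$ is the condition $t_H(A)^2>Mp_n^{2|A|-2|V(H)|}\mathrm{Var}[T(H,G_n)]$, and $\mathbf 1\{\mathcal C_M(\mathbf s)\}=1$ iff $\mathcal C_M(A)$ fails for all nonempty $A\subseteq\bar{\mathbf s}$. $T_M^\circ(H,G_n)=\frac1{|Aut(H)|}\sum_{\mathbf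 s}M_H(\mathbf s)X_{\mathbf s}\mathbf 1\{\mathcal C_M(\mathbf s)\}$. $\lesssim_{H,M,R}1$ means bounded by a constant depending only on $H,M,R$. *)

theory Defs
  imports "HOL-Probability.Probability" "HOL-Combinatorics.Permutations"
begin

definition simple_graph :: "nat set \<Rightarrow> (nat \<Rightarrow> nat \<Rightarrow> bool) \<Rightarrow> bool" where
  "simple_graph V E \<longleftrightarrow> (\<forall>i\<in>V. \<forall>j\<in>V. E i j \<longleftrightarrow> E j i) \<and> (\<forall>i\<in>V. \<not> E i i)"

definition connected_graph :: "nat \<Rightarrow> (nat \<Rightarrow> nat \<Rightarrow> bool) \<Rightarrow> bool" where
  "connected_graph h E \<longleftrightarrow> simple_graph {..<h} E \<and> 0 < h \<and>
     (\<forall>i<h. \<forall>j<h. (\<lambda>x y. x < h \<and> y < h \<and> E x y)\<^sup>*\<^sup>* i j)"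

definition aut_card :: "nat \<Rightarrow> (nat \<Rightarrow> nat \<Rightarrow> bool) \<Rightarrow> nat" where
  "aut_card h E = card {\<sigma>. \<sigma> permutes {..<h} \<and> (\<forall>i<h. \<forall>j<h. E (\<sigma> i) (\<sigma> j) \<longleftrightarrow> E i j)}"

definition edges :: "nat \<Rightarrow> (nat \<Rightarrow> nat \<Rightarrow> bool) \<Rightarrow> (nat \<times> nat) set" where
  "edges h E = {(i, j). i < h \<and> j < h \<and> i < j \<and> E i j}"

definition tuples :: "nat \<Rightarrow> nat \<Rightarrow> (nat \<Rightarrow> nat) set" where
  "tuples h N = {s. s \<in> {..<h} \<rightarrow>\<^sub>E {1..N} \<and> inj_on s {..<h}}"

definition hom_weight :: "nat \<Rightarrow> (nat \<Rightarrow> nat \<Rightarrow> bool) \<Rightarrow> (nat \<Rightarrow> nat \<Rightarrow> bool) \<Rightarrow> (nat \<Rightarrow> nat) \<Rightarrow> real" where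
  "hom_weight h EH a s = (\<Prod>(i, j)\<in>edges h EH. of_bool (a (s i) (s j)))"

definition X_tuple :: "nat \<Rightarrow> (nat \<Rightarrow> bool) \<Rightarrow> (nat \<Rightarrow> nat) \<Rightarrow> real" where
  "X_tuple h x s = (\<Prod>u<h. of_bool (x (s u)))"

definition T_count :: "nat \<Rightarrow> (nat \<Rightarrow> nat \<Rightarrow> bool) \<Rightarrow> nat \<Rightarrow> (nat \<Rightarrow> nat \<Rightarrow> bool) \<Rightarrow> (nat \<Rightarrow> bool) \<Rightarrow> real" where
  "T_count h EH N a x = (1 / real (aut_card h EH)) *
     (\<Sum>s\<in>tuples h N. hom_weight h EH a s * X_tuple h x s)"

definition vertex_pmf :: "nat \<Rightarrow> real \<Rightarrow> (nat \<Rightarrow> bool) pmf" where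
  "vertex_pmf N p = Pi_pmf {1..N} False (\<lambda>_. bernoulli_pmf p)"

definition varT :: "nat \<Rightarrow> (nat \<Rightarrow> nat \<Rightarrow> bool) \<Rightarrow> nat \<Rightarrow> (nat \<Rightarrow> nat \<Rightarrow> bool) \<Rightarrow> real \<Rightarrow> real" where
  "varT h EH N a p = measure_pmf.variance (vertex_pmf N p) (T_count h EH N a)"

definition t_H :: "nat \<Rightarrow> (nat \<Rightarrow> nat \<Rightarrow> bool) \<Rightarrow> nat \<Rightarrow> (nat \<Rightarrow> nat \<Rightarrow> bool) \<Rightarrow> nat set \<Rightarrow> real" where
  "t_H h EH N a A = (1 / real (aut_card h EH)) *
     (\<Sum>s\<in>{s\<in>tuples h N. A \<subseteq> s ` {..<h}}. hom_weight h EH a s)"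

definition cond_C :: "real \<Rightarrow> nat \<Rightarrow> (nat \<Rightarrow> nat \<Rightarrow> bool) \<Rightarrow> nat \<Rightarrow> (nat \<Rightarrow> nat \<Rightarrow> bool) \<Rightarrow> real \<Rightarrow> nat set \<Rightarrow> bool" where
  "cond_C M h EH N a p A \<longleftrightarrow>
     (t_H h EH N a A)\<^sup>2 > M * p powi (2 * int (card A) - 2 * int h) * varT h EH N a p"

definition good_tuple :: "real \<Rightarrow> nat \<Rightarrow> (nat \<Rightarrow> nat \<Rightarrow> bool) \<Rightarrow> nat \<Rightarrow> (nat \<Rightarrow> nat \<Rightarrow> bool) \<Rightarrow> real \<Rightarrow> (nat \<Rightarrow> nat) \<Rightarrow> bool" where
  "good_tuple M h EH N a p s \<longleftrightarrow>
     (\<forall>A. A \<noteq> {} \<and> A \<subseteq> s ` {..<h} \<longrightarrow> \<not> cond_C M h EH N a p A)"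

definition T_trunc :: "real \<Rightarrow> nat \<Rightarrow> (nat \<Rightarrow> nat \<Rightarrow> bool) \<Rightarrow> nat \<Rightarrow> (nat \<Rightarrow> nat \<Rightarrow> bool) \<Rightarrow> real \<Rightarrow> (nat \<Rightarrow> bool) \<Rightarrow> real" where
  "T_trunc M h EH N a p x = (1 / real (aut_card h EH)) *
     (\<Sum>s\<in>tuples h N. hom_weight h EH a s * X_tuple h x s * of_bool (good_tuple M h EH N a p s))"

end

(*
  Write X_v = p + xi_v with centred labels xi_v.  Every tuple indicator X_s is a polynomial in
  the xi_v, so the centred truncated count is sum_B phi_B xi_B over nonempty vertex sets B with
  |B| <= |V(H)|, with nonnegative coefficients phi_B.  Expanding the R-th power,
  E[xi_B1 ... xi_BR] vanishes unless every B_j meets some other B_i, and is then at most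
  q^|B1 u ... u BR| with q = p(1 - p).  The sum over such linked families is bounded by removing
  one set at a time: either it meets the sets already seen, which is paid for by
  L >= Gamma(I) = sum_{B >= I} phi_B q^|B - I|, or it overlaps a set still to come, and the pair
  is paid for by V >= sum_I q^|I| Gamma(I)^2.  Failure of C_M gives L <= 2^|V(H)| sqrt(M Var T),
  and orthogonality of the xi_B gives V <= 4^|V(H)| Var T, so the R-th moment of the truncated
  count is O((Var T)^(R/2)) uniformly in n.
*)

theory Submission
  imports Defs
begin

section \<open>Sums over linked families of sets\<close>

lemma sum_PiE_insert:
  assumes "j \<notin> J"
  shows "(\<Sum>F\<in>PiE (insert j J) B. g F) = (\<Sum>A\<in>B j. \<Sum>F\<in>PiE J B. g (F(j := A)))"
  unfolding PiE_insert_eq sum.reindex[OF inj_combinator[OF assms]] sum.cartesian_product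
  by (simp add: case_prod_unfold)

lemma sum_split_filter:
  assumes "finite A"
  shows "sum f {x\<in>A. P x} = sum f {x\<in>A. P x \<and> Q x} + sum f {x\<in>A. P x \<and> \<not> Q x}"
  using assms by (subst sum.union_disjoint[symmetric]) (auto intro: sum.cong)

lemma of_bool_bex_le_sum:
  assumes "finite J"
  shows "(of_bool (\<exists>i\<in>J. Q i) :: real) \<le> (\<Sum>i\<in>J. of_bool (Q i))"
proof (cases "\<exists>i\<in>J. Q i")
  case True
  then obtain i where "i \<in> J" "Q i" by blast
  then show ?thesis
    using member_le_sum[of i J "\<lambda>i. of_bool (Q i) :: real"] assms by simp
qed (simp add: sum_nonneg)

definition linked_family :: "'i set \<Rightarrow> 'a set \<Rightarrow> ('i \<Rightarrow> 'a set) \<Rightarrow> bool" where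
  "linked_family J W F \<longleftrightarrow>
     (\<forall>j\<in>J. F j \<inter> W \<noteq> {} \<or> (\<exists>i\<in>J. i \<noteq> j \<and> F i \<inter> F j \<noteq> {}))"

lemma linked_family_insert:
  assumes "j \<notin> J" "linked_family (insert j J) W (F(j := A))"
  shows "linked_family J (W \<union> A) F" and "A \<inter> W \<noteq> {} \<or> (\<exists>i\<in>J. F i \<inter> A \<noteq> {})"
  using assms unfolding linked_family_def by (fastforce split: if_splits)+

lemma linked_family_if_covered_twice:
  assumes "\<And>j. j \<in> J \<Longrightarrow> F j \<noteq> {}"
    and "\<And>j v. j \<in> J \<Longrightarrow> v \<in> F j \<Longrightarrow> 2 \<le> card {i\<in>J. v \<in> F i}"
  shows "linked_family J W F"
  unfolding linked_family_def
proof (intro ballI disjI2)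
  fix j assume "j \<in> J"
  then obtain v where "v \<in> F j" using assms(1) by blast
  then have "\<not> {i\<in>J. v \<in> F i} \<subseteq> {j}"
    using assms(2)[OF \<open>j \<in> J\<close>] card_mono[of "{j}" "{i\<in>J. v \<in> F i}"] by fastforce
  then show "\<exists>i\<in>J. i \<noteq> j \<and> F i \<inter> F j \<noteq> {}" using \<open>v \<in> F j\<close> by blast
qed

(* n sets remain to be placed and w bounds the size of the set W they must be linked to; the
   two summands account for the next set meeting W or overlapping one of the other n sets. *)
fun linked_sum_bound :: "nat \<Rightarrow> nat \<Rightarrow> nat \<Rightarrow> real" where
  "linked_sum_bound h 0 w = 1"
| "linked_sum_bound h (Suc n) w =
     2 ^ w * linked_sum_bound h n (w + h)
     + real n * (1 + 2 ^ (2 * w + h)) * linked_sum_bound h (n - 1) (w + 2 * h)"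

lemma linked_sum_bound_nonneg: "0 \<le> linked_sum_bound h n w"
  by (induction h n w rule: linked_sum_bound.induct) auto

(* In the application phi B is the coefficient of xi_B in the centred truncated count, and V is a
   multiple of the variance of the untruncated count. *)
locale overlap_weights =
  fixes U :: "'a set" and P :: "'a set set" and \<phi> :: "'a set \<Rightarrow> real"
    and q L V :: real and h :: nat
  assumes finite_U: "finite U"
    and P_subset: "P \<subseteq> Pow U"
    and card_le: "B \<in> P \<Longrightarrow> card B \<le> h"
    and \<phi>_nonneg: "B \<in> P \<Longrightarrow> 0 \<le> \<phi> B"
    and q_nonneg: "0 \<le> q"
    and L_nonneg: "0 \<le> L"
    and Gamma_le: "I \<noteq> {} \<Longrightarrow> (\<Sum>B\<in>{B\<in>P. I \<subseteq> B}. \<phi> B * q ^ card (B - I)) \<le> L"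
    and Gamma_sq_le:
      "(\<Sum>I\<in>Pow U - {{}}. q ^ card I * (\<Sum>B\<in>{B\<in>P. I \<subseteq> B}. \<phi> B * q ^ card (B - I))\<^sup>2) \<le> V"
begin

lemma finite_P: "finite P"
  using finite_U P_subset by (meson finite_Pow_iff finite_subset)

lemma finite_member: "B \<in> P \<Longrightarrow> finite B"
  using finite_U P_subset finite_subset by blast

definition rel_weight :: "'a set \<Rightarrow> 'a set \<Rightarrow> real" where
  "rel_weight W B = \<phi> B * q ^ card (B - W)"

lemma card_Un_member_le: "B \<in> P \<Longrightarrow> card (W \<union> B) \<le> card W + h"
  using card_Un_le[of W B] card_le[of B] by linarith

lemma rel_weight_nonneg: "B \<in> P \<Longrightarrow> 0 \<le> rel_weight W B"
  unfolding rel_weight_def using \<phi>_nonneg q_nonneg by simp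

definition pair_weight :: "'a set \<Rightarrow> 'a set \<Rightarrow> 'a set \<Rightarrow> real" where
  "pair_weight W A B = \<phi> A * \<phi> B * q ^ card ((A \<union> B) - W)"

lemma pair_weight_commute: "pair_weight W A B = pair_weight W B A"
  by (simp add: pair_weight_def Un_commute mult_ac)

lemma pair_weight_nonneg: "A \<in> P \<Longrightarrow> B \<in> P \<Longrightarrow> 0 \<le> pair_weight W A B"
  by (simp add: pair_weight_def \<phi>_nonneg q_nonneg)

lemma rel_weight_chain:
  assumes "finite A" "finite B"
  shows "rel_weight W A * rel_weight (W \<union> A) B = pair_weight W A B"
proof -
  have "(A \<union> B) - W = (A - W) \<union> (B - (W \<union> A))" by auto
  moreover have "card ((A - W) \<union> (B - (W \<union> A))) = card (A - W) + card (B - (W \<union> A))"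
    by (rule card_Un_disjoint) (use assms in auto)
  ultimately show ?thesis unfolding rel_weight_def pair_weight_def by (simp add: power_add mult_ac)
qed

lemma sum_meeting_le:
  assumes "finite W"
  shows "(\<Sum>B\<in>{B\<in>P. B \<inter> W \<noteq> {}}. rel_weight W B) \<le> 2 ^ card W * L"
proof -
  have "(\<Sum>B\<in>{B\<in>P. B \<inter> W \<noteq> {}}. rel_weight W B)
      = (\<Sum>I\<in>Pow W - {{}}. \<Sum>B\<in>{B\<in>{B\<in>P. B \<inter> W \<noteq> {}}. B \<inter> W = I}. rel_weight W B)"
    by (rule sum.group[symmetric]) (use finite_P assms in auto)
  also have "\<dots> \<le> (\<Sum>I\<in>Pow W - {{}}. L)"
  proof (rule sum_mono)
    fix I assume I: "I \<in> Pow W - {{}}"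
    have "(\<Sum>B\<in>{B\<in>{B\<in>P. B \<inter> W \<noteq> {}}. B \<inter> W = I}. rel_weight W B)
        = (\<Sum>B\<in>{B\<in>{B\<in>P. B \<inter> W \<noteq> {}}. B \<inter> W = I}. rel_weight I B)"
    proof (intro sum.cong refl)
      fix B assume "B \<in> {B\<in>{B\<in>P. B \<inter> W \<noteq> {}}. B \<inter> W = I}"
      then have "B - W = B - I" by blast
      then show "rel_weight W B = rel_weight I B" by (simp add: rel_weight_def)
    qed
    also have "\<dots> \<le> (\<Sum>B\<in>{B\<in>P. I \<subseteq> B}. rel_weight I B)"
      by (rule sum_mono2) (auto simp: finite_P rel_weight_nonneg)
    also have "\<dots> \<le> L"
      using Gamma_le I unfolding rel_weight_def by auto
    finally show "(\<Sum>B\<in>{B\<in>{B\<in>P. B \<inter> W \<noteq> {}}. B \<inter> W = I}. rel_weight W B) \<le> L" .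
  qed
  also have "\<dots> \<le> 2 ^ card W * L"
    using assms L_nonneg by (simp add: card_Pow left_diff_distrib)
  finally show ?thesis .
qed

lemma pair_weight_eq:
  assumes "finite A" "finite B"
  shows "pair_weight {} A B = q ^ card (A \<inter> B) * (rel_weight (A \<inter> B) A * rel_weight (A \<inter> B) B)"
proof -
  have "card (A \<union> B) = card (A \<inter> B) + card (A - A \<inter> B) + card (B - A \<inter> B)"
    using assms card_Un_Int[OF assms] card_mono[of A "A \<inter> B"] card_mono[of B "A \<inter> B"]
    by (simp add: card_Diff_subset)
  then show ?thesis unfolding rel_weight_def pair_weight_def by (simp add: power_add mult_ac)
qed

lemma sum_overlapping_pairs_le: "(\<Sum>A\<in>P. \<Sum>B\<in>{B\<in>P. A \<inter> B \<noteq> {}}. pair_weight {} A B) \<le> V"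
proof -
  define \<Gamma> where "\<Gamma> I = (\<Sum>B\<in>{B\<in>P. I \<subseteq> B}. rel_weight I B)" for I
  define g where "g = (\<lambda>(A, B). q ^ card (A \<inter> B) * (rel_weight (A \<inter> B) A * rel_weight (A \<inter> B) B))"
  define Q where "Q = {(A, B) \<in> P \<times> P. A \<inter> B \<noteq> {}}"
  have finite_Q: "finite Q"
    unfolding Q_def by (rule finite_subset[of _ "P \<times> P"]) (auto simp: finite_P)
  have "Q = Sigma P (\<lambda>A. {B\<in>P. A \<inter> B \<noteq> {}})" unfolding Q_def by auto
  then have "(\<Sum>A\<in>P. \<Sum>B\<in>{B\<in>P. A \<inter> B \<noteq> {}}. pair_weight {} A B) = sum g Q"
    by (simp add: sum.Sigma finite_P g_def pair_weight_eq finite_member)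
  txt \<open>Grouping the pairs by their intersection I produces the terms q^|I| Gamma(I)^2.\<close>
  also have "\<dots> = (\<Sum>I\<in>Pow U - {{}}. \<Sum>AB\<in>{AB\<in>Q. fst AB \<inter> snd AB = I}. g AB)"
    by (rule sum.group[symmetric]) (use finite_Q finite_U P_subset in \<open>fastforce simp: Q_def\<close>)+
  also have "\<dots> \<le> (\<Sum>I\<in>Pow U - {{}}. q ^ card I * \<Gamma> I ^ 2)"
  proof (rule sum_mono)
    fix I
    have "(\<Sum>AB\<in>{AB\<in>Q. fst AB \<inter> snd AB = I}. g AB)
        = (\<Sum>(A, B)\<in>{AB\<in>Q. fst AB \<inter> snd AB = I}. q ^ card I * (rel_weight I A * rel_weight I B))"
      by (intro sum.cong refl) (auto simp: g_def)
    also have "\<dots> \<le> (\<Sum>(A, B)\<in>{B\<in>P. I \<subseteq> B} \<times> {B\<in>P. I \<subseteq> B}.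
        q ^ card I * (rel_weight I A * rel_weight I B))"
      by (rule sum_mono2) (auto simp: finite_P Q_def q_nonneg rel_weight_nonneg)
    also have "\<dots> = q ^ card I * \<Gamma> I ^ 2"
      by (simp add: \<Gamma>_def sum.cartesian_product[symmetric] power2_eq_square sum_product sum_distrib_left mult_ac)
    finally show "(\<Sum>AB\<in>{AB\<in>Q. fst AB \<inter> snd AB = I}. g AB) \<le> q ^ card I * \<Gamma> I ^ 2" .
  qed
  also have "\<dots> \<le> V"
    using Gamma_sq_le unfolding \<Gamma>_def rel_weight_def .
  finally show ?thesis .
qed

lemma sum_avoiding_pairs_le:
  "(\<Sum>A\<in>{A\<in>P. A \<inter> W = {}}. \<Sum>B\<in>{B\<in>P. B \<inter> A \<noteq> {} \<and> B \<inter> W = {}}. pair_weight W A B) \<le> V"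
proof -
  have "(\<Sum>A\<in>{A\<in>P. A \<inter> W = {}}. \<Sum>B\<in>{B\<in>P. B \<inter> A \<noteq> {} \<and> B \<inter> W = {}}. pair_weight W A B)
      = (\<Sum>A\<in>{A\<in>P. A \<inter> W = {}}. \<Sum>B\<in>{B\<in>P. B \<inter> A \<noteq> {} \<and> B \<inter> W = {}}. pair_weight {} A B)"
  proof (intro sum.cong refl)
    fix A B assume "A \<in> {A\<in>P. A \<inter> W = {}}" "B \<in> {B\<in>P. B \<inter> A \<noteq> {} \<and> B \<inter> W = {}}"
    then have "(A \<union> B) - W = A \<union> B" by blast
    then show "pair_weight W A B = pair_weight {} A B" by (simp add: pair_weight_def)
  qed
  also have "\<dots> \<le> (\<Sum>A\<in>{A\<in>P. A \<inter> W = {}}. \<Sum>B\<in>{B\<in>P. A \<inter> B \<noteq> {}}. pair_weight {} A B)"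
    by (intro sum_mono sum_mono2) (auto simp: finite_P pair_weight_nonneg)
  also have "\<dots> \<le> (\<Sum>A\<in>P. \<Sum>B\<in>{B\<in>P. A \<inter> B \<noteq> {}}. pair_weight {} A B)"
    by (intro sum_mono2 sum_nonneg) (auto simp: finite_P pair_weight_nonneg)
  also have "\<dots> \<le> V"
    by (rule sum_overlapping_pairs_le)
  finally show ?thesis .
qed

lemma sum_meeting_twice_le:
  assumes "finite W"
  shows "(\<Sum>B\<in>{B\<in>P. B \<inter> W \<noteq> {}}.
      rel_weight W B * (\<Sum>A\<in>{A\<in>P. A \<inter> (W \<union> B) \<noteq> {}}. rel_weight (W \<union> B) A))
    \<le> 2 ^ card W * L * (2 ^ (card W + h) * L)"
proof -
  have "(\<Sum>A\<in>{A\<in>P. A \<inter> (W \<union> B) \<noteq> {}}. rel_weight (W \<union> B) A) \<le> 2 ^ (card W + h) * L"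
    if "B \<in> P" for B
  proof -
    have "(2::real) ^ card (W \<union> B) \<le> 2 ^ (card W + h)"
      by (rule power_increasing[OF card_Un_member_le[OF that]]) simp
    then show ?thesis
      using sum_meeting_le[of "W \<union> B"] assms finite_member[OF that] L_nonneg
      by (meson finite_UnI mult_right_mono order_trans)
  qed
  then have "(\<Sum>B\<in>{B\<in>P. B \<inter> W \<noteq> {}}.
        rel_weight W B * (\<Sum>A\<in>{A\<in>P. A \<inter> (W \<union> B) \<noteq> {}}. rel_weight (W \<union> B) A))
      \<le> (\<Sum>B\<in>{B\<in>P. B \<inter> W \<noteq> {}}. rel_weight W B) * (2 ^ (card W + h) * L)"
    unfolding sum_distrib_right by (intro sum_mono mult_left_mono) (auto simp: rel_weight_nonneg)
  also have "\<dots> \<le> 2 ^ card W * L * (2 ^ (card W + h) * L)"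
    by (rule mult_right_mono[OF sum_meeting_le[OF assms]]) (simp add: L_nonneg)
  finally show ?thesis .
qed

lemma sum_meeting_pairs_le:
  assumes "finite W"
  shows "(\<Sum>A\<in>{A\<in>P. A \<inter> W = {}}. \<Sum>B\<in>{B\<in>P. B \<inter> A \<noteq> {} \<and> B \<inter> W \<noteq> {}}. pair_weight W A B)
    \<le> 2 ^ card W * L * (2 ^ (card W + h) * L)"
proof -
  let ?A = "{A\<in>P. A \<inter> W = {}}"
  have "(\<Sum>A\<in>?A. \<Sum>B\<in>{B\<in>P. B \<inter> A \<noteq> {} \<and> B \<inter> W \<noteq> {}}. pair_weight W A B)
      = (\<Sum>B\<in>{B\<in>P. B \<inter> W \<noteq> {}}. \<Sum>A\<in>{A\<in>?A. B \<inter> A \<noteq> {}}. pair_weight W B A)"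
    using sum.swap_restrict[of ?A "{B\<in>P. B \<inter> W \<noteq> {}}" "pair_weight W" "\<lambda>A B. B \<inter> A \<noteq> {}"]
    by (simp add: finite_P conj_ac pair_weight_commute)
  also have "\<dots> \<le> (\<Sum>B\<in>{B\<in>P. B \<inter> W \<noteq> {}}. \<Sum>A\<in>{A\<in>P. A \<inter> (W \<union> B) \<noteq> {}}. pair_weight W B A)"
    by (intro sum_mono sum_mono2) (auto simp: finite_P pair_weight_nonneg)
  also have "\<dots> = (\<Sum>B\<in>{B\<in>P. B \<inter> W \<noteq> {}}.
      rel_weight W B * (\<Sum>A\<in>{A\<in>P. A \<inter> (W \<union> B) \<noteq> {}}. rel_weight (W \<union> B) A))"
    by (simp add: sum_distrib_left rel_weight_chain finite_member)
  also have "\<dots> \<le> 2 ^ card W * L * (2 ^ (card W + h) * L)"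
    by (rule sum_meeting_twice_le[OF assms])
  finally show ?thesis .
qed

lemma two_step_le:
  assumes "finite W"
  shows "(\<Sum>A\<in>{A\<in>P. A \<inter> W = {}}. rel_weight W A * (\<Sum>B\<in>{B\<in>P. B \<inter> A \<noteq> {}}. rel_weight (W \<union> A) B))
    \<le> V + 2 ^ card W * L * (2 ^ (card W + h) * L)"
proof -
  let ?A = "{A\<in>P. A \<inter> W = {}}"
  have "(\<Sum>A\<in>?A. rel_weight W A * (\<Sum>B\<in>{B\<in>P. B \<inter> A \<noteq> {}}. rel_weight (W \<union> A) B))
      = (\<Sum>A\<in>?A. \<Sum>B\<in>{B\<in>P. B \<inter> A \<noteq> {}}. pair_weight W A B)"
    by (simp add: sum_distrib_left rel_weight_chain finite_member)
  also have "\<dots> = (\<Sum>A\<in>?A. \<Sum>B\<in>{B\<in>P. B \<inter> A \<noteq> {} \<and> B \<inter> W = {}}. pair_weight W A B)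
                 + (\<Sum>A\<in>?A. \<Sum>B\<in>{B\<in>P. B \<inter> A \<noteq> {} \<and> B \<inter> W \<noteq> {}}. pair_weight W A B)"
    unfolding sum.distrib[symmetric] by (intro sum.cong refl sum_split_filter finite_P)
  also have "\<dots> \<le> V + 2 ^ card W * L * (2 ^ (card W + h) * L)"
    by (rule add_mono[OF sum_avoiding_pairs_le sum_meeting_pairs_le[OF assms]])
  finally show ?thesis .
qed

definition plain_weight :: "'i set \<Rightarrow> 'a set \<Rightarrow> ('i \<Rightarrow> 'a set) \<Rightarrow> real" where
  "plain_weight J W F = (\<Prod>j\<in>J. \<phi> (F j)) * q ^ card (\<Union>(F ` J) - W)"

definition family_weight :: "'i set \<Rightarrow> 'a set \<Rightarrow> ('i \<Rightarrow> 'a set) \<Rightarrow> real" where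
  "family_weight J W F = of_bool (linked_family J W F) * plain_weight J W F"

definition linked_sum :: "'i set \<Rightarrow> 'a set \<Rightarrow> real" where
  "linked_sum J W = (\<Sum>F\<in>J \<rightarrow>\<^sub>E P. family_weight J W F)"

lemma family_weight_nonneg: "F \<in> J \<rightarrow>\<^sub>E P \<Longrightarrow> 0 \<le> family_weight J W F"
  unfolding family_weight_def plain_weight_def using \<phi>_nonneg q_nonneg
  by (intro mult_nonneg_nonneg prod_nonneg) (auto simp: PiE_iff)

lemma finite_families: "finite J \<Longrightarrow> finite (J \<rightarrow>\<^sub>E P)"
  by (simp add: finite_PiE finite_P)

lemma linked_sum_empty: "linked_sum {} W = 1"
  by (simp add: linked_sum_def family_weight_def plain_weight_def linked_family_def)

lemma plain_weight_insert:
  assumes "finite J" "j \<notin> J" "F \<in> J \<rightarrow>\<^sub>E P" "A \<in> P"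
  shows "plain_weight (insert j J) W (F(j := A)) = rel_weight W A * plain_weight J (W \<union> A) F"
proof -
  have F_eq: "(F(j := A)) ` J = F ` J" "(\<Prod>i\<in>J. \<phi> ((F(j := A)) i)) = (\<Prod>i\<in>J. \<phi> (F i))"
    using assms(2) by (auto intro: prod.cong)
  have "\<Union>((F(j := A)) ` insert j J) - W = (A - W) \<union> (\<Union>(F ` J) - (W \<union> A))"
    using F_eq(1) by auto
  moreover have "card ((A - W) \<union> (\<Union>(F ` J) - (W \<union> A))) = card (A - W) + card (\<Union>(F ` J) - (W \<union> A))"
    using assms finite_member by (intro card_Un_disjoint) (auto simp: PiE_iff)
  ultimately show ?thesis
    using assms(1,2) F_eq(2) by (simp add: plain_weight_def rel_weight_def power_add mult_ac)
qed

lemma family_weight_insert_le: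
  assumes "finite J" "j \<notin> J" "F \<in> J \<rightarrow>\<^sub>E P" "A \<in> P"
  shows "family_weight (insert j J) W (F(j := A))
    \<le> rel_weight W A * family_weight J (W \<union> A) F * of_bool (A \<inter> W \<noteq> {} \<or> (\<exists>i\<in>J. F i \<inter> A \<noteq> {}))"
proof (cases "linked_family (insert j J) W (F(j := A))")
  case True
  then show ?thesis
    using linked_family_insert[OF assms(2) True]
    by (simp add: family_weight_def plain_weight_insert[OF assms])
next
  case False
  have "0 \<le> rel_weight W A * family_weight J (W \<union> A) F"
    using assms by (intro mult_nonneg_nonneg rel_weight_nonneg family_weight_nonneg)
  then show ?thesis
    using False by (simp add: family_weight_def)
qed

lemma family_weight_insert_le':
  assumes "finite J" "j \<notin> J" "F \<in> J \<rightarrow>\<^sub>E P" "A \<in> P"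
  shows "family_weight (insert j J) W (F(j := A)) \<le> rel_weight W A * family_weight J (W \<union> A) F"
proof -
  have "0 \<le> rel_weight W A * family_weight J (W \<union> A) F"
    using assms by (intro mult_nonneg_nonneg rel_weight_nonneg family_weight_nonneg)
  then show ?thesis
    using family_weight_insert_le[OF assms, of W] by (meson mult_left_le of_bool_less_eq_one order_trans)
qed

lemma linked_sum_insert_union_bound:
  assumes "finite J" "j \<notin> J"
  shows "linked_sum (insert j J) W
    \<le> (\<Sum>A\<in>P. \<Sum>F\<in>J \<rightarrow>\<^sub>E P. rel_weight W A * family_weight J (W \<union> A) F *
          (if A \<inter> W \<noteq> {} then 1 else \<Sum>i\<in>J. of_bool (F i \<inter> A \<noteq> {})))"
  unfolding linked_sum_def sum_PiE_insert[OF assms(2)]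
proof (intro sum_mono)
  fix A F assume AF: "A \<in> P" "F \<in> J \<rightarrow>\<^sub>E P"
  then have "0 \<le> rel_weight W A * family_weight J (W \<union> A) F"
    by (intro mult_nonneg_nonneg rel_weight_nonneg family_weight_nonneg)
  moreover have "of_bool (A \<inter> W \<noteq> {} \<or> (\<exists>i\<in>J. F i \<inter> A \<noteq> {}))
      \<le> (if A \<inter> W \<noteq> {} then 1 else \<Sum>i\<in>J. of_bool (F i \<inter> A \<noteq> {}) :: real)"
    using of_bool_bex_le_sum[OF assms(1), of "\<lambda>i. F i \<inter> A \<noteq> {}"] by simp
  ultimately show "family_weight (insert j J) W (F(j := A))
      \<le> rel_weight W A * family_weight J (W \<union> A) F *
          (if A \<inter> W \<noteq> {} then 1 else \<Sum>i\<in>J. of_bool (F i \<inter> A \<noteq> {}))"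
    using family_weight_insert_le[OF assms AF(2,1), of W] by (meson mult_left_mono order_trans)
qed

lemma linked_sum_insert_le:
  assumes "finite J" "j \<notin> J"
  shows "linked_sum (insert j J) W
    \<le> (\<Sum>A\<in>{A\<in>P. A \<inter> W \<noteq> {}}. rel_weight W A * linked_sum J (W \<union> A))
      + (\<Sum>i\<in>J. \<Sum>A\<in>{A\<in>P. A \<inter> W = {}}. rel_weight W A *
           (\<Sum>F\<in>{F\<in>J \<rightarrow>\<^sub>E P. F i \<inter> A \<noteq> {}}. family_weight J (W \<union> A) F))"
    (is "_ \<le> ?meet + ?overlap")
proof -
  let ?f = "\<lambda>A F. rel_weight W A * family_weight J (W \<union> A) F"
  let ?c = "\<lambda>A F. if A \<inter> W \<noteq> {} then 1 else (\<Sum>i\<in>J. of_bool (F i \<inter> A \<noteq> {}) :: real)"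
  have "(\<Sum>F\<in>J \<rightarrow>\<^sub>E P. ?f A F * ?c A F)
      = (if A \<inter> W \<noteq> {} then rel_weight W A * linked_sum J (W \<union> A)
         else (\<Sum>i\<in>J. rel_weight W A *
           (\<Sum>F\<in>{F\<in>J \<rightarrow>\<^sub>E P. F i \<inter> A \<noteq> {}}. family_weight J (W \<union> A) F)))" for A
  proof (cases "A \<inter> W = {}")
    case True
    then have "(\<Sum>F\<in>J \<rightarrow>\<^sub>E P. ?f A F * ?c A F)
        = (\<Sum>i\<in>J. \<Sum>F\<in>J \<rightarrow>\<^sub>E P. ?f A F * of_bool (F i \<inter> A \<noteq> {}))"
      by (simp only: simp_thms if_False sum_distrib_left) (rule sum.swap)
    also have "\<dots> = (\<Sum>i\<in>J. rel_weight W A *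
        (\<Sum>F\<in>{F\<in>J \<rightarrow>\<^sub>E P. F i \<inter> A \<noteq> {}}. family_weight J (W \<union> A) F))"
      by (intro sum.cong refl) (simp add: sum_distrib_left Collect_conj_eq finite_families assms(1))
    finally show ?thesis using True by simp
  qed (simp add: linked_sum_def sum_distrib_left)
  then have "(\<Sum>A\<in>P. \<Sum>F\<in>J \<rightarrow>\<^sub>E P. ?f A F * ?c A F)
      = ?meet + (\<Sum>A\<in>{A\<in>P. A \<inter> W = {}}. \<Sum>i\<in>J. rel_weight W A *
           (\<Sum>F\<in>{F\<in>J \<rightarrow>\<^sub>E P. F i \<inter> A \<noteq> {}}. family_weight J (W \<union> A) F))"
    by (simp only: sum.If_cases[OF finite_P] Int_def Compl_iff mem_Collect_eq not_not)
  also have "\<dots> = ?meet + ?overlap"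
    by (simp only: sum.swap[of _ "{A\<in>P. A \<inter> W = {}}" J])
  finally show ?thesis
    using linked_sum_insert_union_bound[OF assms, of W] by simp
qed

lemma sum_families_meeting_le:
  assumes "finite J" "i \<in> J"
  shows "(\<Sum>F\<in>{F\<in>J \<rightarrow>\<^sub>E P. F i \<inter> A \<noteq> {}}. family_weight J W F)
    \<le> (\<Sum>A'\<in>{A'\<in>P. A' \<inter> A \<noteq> {}}. rel_weight W A' * linked_sum (J - {i}) (W \<union> A'))"
proof -
  define J' where "J' = J - {i}"
  have J: "J = insert i J'" "i \<notin> J'" "finite J'"
    using assms by (auto simp: J'_def)
  have "(\<Sum>F\<in>{F\<in>J \<rightarrow>\<^sub>E P. F i \<inter> A \<noteq> {}}. family_weight J W F)
      = (\<Sum>F\<in>J \<rightarrow>\<^sub>E P. of_bool (F i \<inter> A \<noteq> {}) * family_weight J W F)"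
    by (simp add: Collect_conj_eq finite_families assms(1))
  also have "\<dots> = (\<Sum>A'\<in>P. of_bool (A' \<inter> A \<noteq> {}) *
      (\<Sum>G\<in>J' \<rightarrow>\<^sub>E P. family_weight (insert i J') W (G(i := A'))))"
    unfolding J(1) sum_PiE_insert[OF J(2)] by (simp add: sum_distrib_left)
  also have "\<dots> \<le> (\<Sum>A'\<in>P. of_bool (A' \<inter> A \<noteq> {}) *
      (\<Sum>G\<in>J' \<rightarrow>\<^sub>E P. rel_weight W A' * family_weight J' (W \<union> A') G))"
    by (intro sum_mono mult_left_mono family_weight_insert_le'[OF J(3,2)]) auto
  also have "\<dots> = (\<Sum>A'\<in>P. of_bool (A' \<inter> A \<noteq> {}) * (rel_weight W A' * linked_sum J' (W \<union> A')))"
    by (simp add: linked_sum_def sum_distrib_left)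
  also have "\<dots> = (\<Sum>A'\<in>{A'\<in>P. A' \<inter> A \<noteq> {}}. rel_weight W A' * linked_sum J' (W \<union> A'))"
    by (simp add: Collect_conj_eq finite_P)
  finally show ?thesis unfolding J'_def .
qed

lemma meeting_factor_le:
  assumes "card W \<le> w" "L \<le> \<kappa>"
  shows "2 ^ card W * L \<le> 2 ^ w * \<kappa>"
  using assms L_nonneg by (intro mult_mono power_increasing) auto

lemma overlap_factor_le:
  assumes "card W \<le> w" "L \<le> \<kappa>" "V \<le> \<kappa>\<^sup>2"
  shows "V + 2 ^ card W * L * (2 ^ (card W + h) * L) \<le> (1 + 2 ^ (2 * w + h)) * \<kappa>\<^sup>2"
proof -
  have "2 ^ card W * L * (2 ^ (card W + h) * L) \<le> 2 ^ w * \<kappa> * (2 ^ (w + h) * \<kappa>)"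
    using assms L_nonneg by (intro mult_mono power_increasing) auto
  also have "\<dots> = 2 ^ (2 * w + h) * \<kappa>\<^sup>2"
    by (simp add: power_add power2_eq_square mult_2)
  finally show ?thesis using assms(3) by (simp add: distrib_right)
qed

lemma meeting_term_le:
  fixes \<kappa> K :: real
  assumes "finite W" "card W \<le> w" "L \<le> \<kappa>" "0 \<le> K"
    and K: "\<And>W'. finite W' \<Longrightarrow> card W' \<le> w + h \<Longrightarrow> linked_sum J W' \<le> K"
  shows "(\<Sum>A\<in>{A\<in>P. A \<inter> W \<noteq> {}}. rel_weight W A * linked_sum J (W \<union> A)) \<le> 2 ^ w * \<kappa> * K"
proof -
  have "linked_sum J (W \<union> A) \<le> K" if "A \<in> P" for A
    using K[of "W \<union> A"] assms(1,2) card_Un_member_le[OF that, of W] finite_member[OF that] by simp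
  then have "(\<Sum>A\<in>{A\<in>P. A \<inter> W \<noteq> {}}. rel_weight W A * linked_sum J (W \<union> A))
      \<le> (\<Sum>A\<in>{A\<in>P. A \<inter> W \<noteq> {}}. rel_weight W A) * K"
    unfolding sum_distrib_right by (intro sum_mono mult_left_mono) (auto simp: rel_weight_nonneg)
  also have "\<dots> \<le> 2 ^ card W * L * K"
    by (rule mult_right_mono[OF sum_meeting_le[OF assms(1)] assms(4)])
  also have "\<dots> \<le> 2 ^ w * \<kappa> * K"
    by (rule mult_right_mono[OF meeting_factor_le[OF assms(2,3)] assms(4)])
  finally show ?thesis .
qed

lemma overlap_term_le:
  fixes \<kappa> K :: real
  assumes "finite J" "i \<in> J" "finite W" "card W \<le> w" "L \<le> \<kappa>" "V \<le> \<kappa>\<^sup>2" "0 \<le> K"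
    and K: "\<And>W'. finite W' \<Longrightarrow> card W' \<le> w + 2 * h \<Longrightarrow> linked_sum (J - {i}) W' \<le> K"
  shows "(\<Sum>A\<in>{A\<in>P. A \<inter> W = {}}. rel_weight W A *
           (\<Sum>F\<in>{F\<in>J \<rightarrow>\<^sub>E P. F i \<inter> A \<noteq> {}}. family_weight J (W \<union> A) F))
    \<le> (1 + 2 ^ (2 * w + h)) * \<kappa>\<^sup>2 * K"
proof -
  have "(\<Sum>F\<in>{F\<in>J \<rightarrow>\<^sub>E P. F i \<inter> A \<noteq> {}}. family_weight J (W \<union> A) F)
      \<le> (\<Sum>A'\<in>{A'\<in>P. A' \<inter> A \<noteq> {}}. rel_weight (W \<union> A) A') * K" if "A \<in> P" for A
  proof -
    have "linked_sum (J - {i}) (W \<union> A \<union> A') \<le> K" if "A' \<in> P" for A'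
      using K assms(3,4) finite_member \<open>A \<in> P\<close> that
        card_Un_member_le[of A W] card_Un_member_le[of A' "W \<union> A"] by simp
    then have "(\<Sum>A'\<in>{A'\<in>P. A' \<inter> A \<noteq> {}}. rel_weight (W \<union> A) A' * linked_sum (J - {i}) (W \<union> A \<union> A'))
        \<le> (\<Sum>A'\<in>{A'\<in>P. A' \<inter> A \<noteq> {}}. rel_weight (W \<union> A) A') * K"
      unfolding sum_distrib_right by (intro sum_mono mult_left_mono) (auto simp: rel_weight_nonneg)
    with sum_families_meeting_le[OF assms(1,2)] show ?thesis
      by (rule order_trans)
  qed
  then have "(\<Sum>A\<in>{A\<in>P. A \<inter> W = {}}. rel_weight W A *
           (\<Sum>F\<in>{F\<in>J \<rightarrow>\<^sub>E P. F i \<inter> A \<noteq> {}}. family_weight J (W \<union> A) F))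
      \<le> (\<Sum>A\<in>{A\<in>P. A \<inter> W = {}}. rel_weight W A *
           (\<Sum>A'\<in>{A'\<in>P. A' \<inter> A \<noteq> {}}. rel_weight (W \<union> A) A')) * K"
    unfolding sum_distrib_right mult.assoc
    by (intro sum_mono mult_left_mono) (auto simp: rel_weight_nonneg)
  also have "\<dots> \<le> (V + 2 ^ card W * L * (2 ^ (card W + h) * L)) * K"
    by (rule mult_right_mono[OF two_step_le[OF assms(3)] assms(7)])
  also have "\<dots> \<le> (1 + 2 ^ (2 * w + h)) * \<kappa>\<^sup>2 * K"
    by (rule mult_right_mono[OF overlap_factor_le[OF assms(4,5,6)] assms(7)])
  finally show ?thesis .
qed

lemma linked_sum_insert_bound:
  fixes \<kappa> K1 K2 :: real
  assumes "finite J" "j \<notin> J" "finite W" "card W \<le> w" "L \<le> \<kappa>" "V \<le> \<kappa>\<^sup>2" "0 \<le> K1" "0 \<le> K2"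
    and K1: "\<And>W'. finite W' \<Longrightarrow> card W' \<le> w + h \<Longrightarrow> linked_sum J W' \<le> K1"
    and K2: "\<And>i W'. i \<in> J \<Longrightarrow> finite W' \<Longrightarrow> card W' \<le> w + 2 * h
      \<Longrightarrow> linked_sum (J - {i}) W' \<le> K2"
  shows "linked_sum (insert j J) W
    \<le> 2 ^ w * \<kappa> * K1 + real (card J) * ((1 + 2 ^ (2 * w + h)) * \<kappa>\<^sup>2 * K2)"
proof -
  have "(\<Sum>i\<in>J. \<Sum>A\<in>{A\<in>P. A \<inter> W = {}}. rel_weight W A *
       (\<Sum>F\<in>{F\<in>J \<rightarrow>\<^sub>E P. F i \<inter> A \<noteq> {}}. family_weight J (W \<union> A) F))
    \<le> (\<Sum>i\<in>J. (1 + 2 ^ (2 * w + h)) * \<kappa>\<^sup>2 * K2)"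
    by (intro sum_mono overlap_term_le[OF assms(1) _ assms(3-6,8)] K2)
  then show ?thesis
    using linked_sum_insert_le[OF assms(1,2), of W] meeting_term_le[OF assms(3,4,5,7) K1] by simp
qed

lemma linked_sum_le:
  assumes "0 \<le> \<kappa>" "L \<le> \<kappa>" "V \<le> \<kappa>\<^sup>2"
  shows "finite J \<Longrightarrow> finite W \<Longrightarrow> card W \<le> w
    \<Longrightarrow> linked_sum J W \<le> linked_sum_bound h (card J) w * \<kappa> ^ card J"
proof (induction "card J" arbitrary: J W w rule: less_induct)
  case less
  show ?case
  proof (cases "J = {}")
    case True
    then show ?thesis by (simp add: linked_sum_empty)
  next
    case False
    then obtain j where "j \<in> J" by blast
    define J' where "J' = J - {j}"
    define n where "n = card J'"
    have J: "J = insert j J'" "j \<notin> J'" "finite J'" "card J = Suc n"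
      using \<open>j \<in> J\<close> less.prems(1) by (auto simp: J'_def n_def card_Suc_Diff1 simp del: card_Diff_insert)
    have "linked_sum (insert j J') W
      \<le> 2 ^ w * \<kappa> * (linked_sum_bound h n (w + h) * \<kappa> ^ n)
        + real n * ((1 + 2 ^ (2 * w + h)) * \<kappa>\<^sup>2 * (linked_sum_bound h (n - 1) (w + 2 * h) * \<kappa> ^ (n - 1)))"
      unfolding n_def
    proof (rule linked_sum_insert_bound[OF J(3,2) less.prems(2,3) assms(2,3)])
      fix W' :: "'a set" assume "finite W'" "card W' \<le> w + h"
      then show "linked_sum J' W' \<le> linked_sum_bound h (card J') (w + h) * \<kappa> ^ card J'"
        using less.hyps[of J'] J by (simp add: n_def)
    next
      fix i and W' :: "'a set" assume "i \<in> J'" "finite W'" "card W' \<le> w + 2 * h"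
      then show "linked_sum (J' - {i}) W' \<le> linked_sum_bound h (card J' - 1) (w + 2 * h) * \<kappa> ^ (card J' - 1)"
        using less.hyps[of "J' - {i}"] J by (simp add: n_def)
    qed (use assms(1) linked_sum_bound_nonneg in simp_all)
    also have "\<dots> = linked_sum_bound h (card J) w * \<kappa> ^ card J"
      unfolding J(4) by (cases n) (simp_all add: algebra_simps power2_eq_square)
    finally show ?thesis using J(1) by simp
  qed
qed

end

section \<open>Centred Bernoulli vertex labels\<close>

lemma expectation_Pi_pmf_prod:
  fixes f :: "'a \<Rightarrow> 'b::finite \<Rightarrow> real"
  assumes "finite A"
  shows "measure_pmf.expectation (Pi_pmf A dflt Q) (\<lambda>y. \<Prod>x\<in>A. f x (y x))
       = (\<Prod>x\<in>A. measure_pmf.expectation (Q x) (f x))"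
proof -
  have "prob_space.indep_vars (measure_pmf (Pi_pmf A dflt Q)) (\<lambda>_. borel) (\<lambda>x y. f x (y x)) A"
    by (rule prob_space.indep_vars_compose2[OF measure_pmf.prob_space_axioms indep_vars_Pi_pmf[OF assms]])
      simp
  moreover have "integrable (Pi_pmf A dflt Q) (\<lambda>y. f x (y x))" for x
    by (intro integrable_measure_pmf_finite finite_subset[OF set_Pi_pmf_subset'[OF assms]]
        finite_PiE_dflt assms) simp
  ultimately have "measure_pmf.expectation (Pi_pmf A dflt Q) (\<lambda>y. \<Prod>x\<in>A. f x (y x))
       = (\<Prod>x\<in>A. measure_pmf.expectation (Pi_pmf A dflt Q) (\<lambda>y. f x (y x)))"
    using assms by (intro prob_space.indep_vars_lebesgue_integral[OF measure_pmf.prob_space_axioms]) auto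
  also have "\<dots> = (\<Prod>x\<in>A. measure_pmf.expectation (Q x) (f x))"
    using Pi_pmf_component[OF assms, of _ dflt Q] by (intro prod.cong refl) (metis integral_map_pmf)
  finally show ?thesis .
qed

lemma expectation_vertex_pmf_prod:
  fixes g :: "nat \<Rightarrow> bool \<Rightarrow> real"
  assumes "W \<subseteq> {1..N}" "0 \<le> p" "p \<le> 1"
  shows "measure_pmf.expectation (vertex_pmf N p) (\<lambda>x. \<Prod>v\<in>W. g v (x v))
       = (\<Prod>v\<in>W. p * g v True + (1 - p) * g v False)"
proof -
  define f where "f v = (if v \<in> W then g v else (\<lambda>_. 1))" for v
  have "(\<Prod>v\<in>W. g v (x v)) = (\<Prod>v\<in>{1..N}. f v (x v))" for x
    using assms(1) by (intro prod.mono_neutral_cong_left) (auto simp: f_def)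
  moreover have "(\<Prod>v\<in>W. p * g v True + (1 - p) * g v False)
      = (\<Prod>v\<in>{1..N}. p * f v True + (1 - p) * f v False)"
    using assms(1) by (intro prod.mono_neutral_cong_left) (auto simp: f_def)
  ultimately show ?thesis
    using assms(2,3) by (simp add: vertex_pmf_def expectation_Pi_pmf_prod mult_ac)
qed

lemma finite_set_vertex_pmf: "finite (set_pmf (vertex_pmf N p))"
  unfolding vertex_pmf_def
  by (intro finite_subset[OF set_Pi_pmf_subset'] finite_PiE_dflt) auto

lemma integrable_vertex_pmf:
  "integrable (measure_pmf (vertex_pmf N p)) (f :: _ \<Rightarrow> 'b::{banach, second_countable_topology})"
  by (rule integrable_measure_pmf_finite[OF finite_set_vertex_pmf])

lemma expectation_vertex_pmf_sum:
  fixes f :: "'i \<Rightarrow> (nat \<Rightarrow> bool) \<Rightarrow> real"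
  shows "measure_pmf.expectation (vertex_pmf N p) (\<lambda>x. \<Sum>i\<in>I. f i x)
       = (\<Sum>i\<in>I. measure_pmf.expectation (vertex_pmf N p) (f i))"
  by (rule Bochner_Integration.integral_sum) (rule integrable_vertex_pmf)

lemma power2_two_power_mult: "(2 ^ n * x)\<^sup>2 = 4 ^ n * (x::real)\<^sup>2"
proof -
  have "(2::real) ^ n * 2 ^ n = 4 ^ n" by (simp flip: power_mult_distrib)
  then show ?thesis by (simp add: power2_eq_square mult_ac)
qed

locale bernoulli_labels =
  fixes N :: nat and p :: real
  assumes p_pos: "0 < p" and p_less_1: "p < 1"
begin

definition q :: real where "q = p * (1 - p)"

definition xi :: "(nat \<Rightarrow> bool) \<Rightarrow> nat set \<Rightarrow> real" where
  "xi x B = (\<Prod>v\<in>B. of_bool (x v) - p)"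

definition central_moment :: "nat \<Rightarrow> real" where
  "central_moment m = p * (1 - p) ^ m + (1 - p) * (- p) ^ m"

lemma q_nonneg: "0 \<le> q"
  using p_pos p_less_1 by (simp add: q_def)

lemma q_le_p: "q \<le> p"
  using p_pos p_less_1 by (simp add: q_def mult_left_le)

lemma central_moment_0: "central_moment 0 = 1"
  and central_moment_1: "central_moment 1 = 0"
  and central_moment_2: "central_moment 2 = q"
  by (simp_all add: central_moment_def q_def algebra_simps power2_eq_square)

lemma abs_central_moment_le:
  assumes "2 \<le> m"
  shows "\<bar>central_moment m\<bar> \<le> q"
proof -
  have "\<bar>central_moment m\<bar> \<le> \<bar>p * (1 - p) ^ m\<bar> + \<bar>(1 - p) * (- p) ^ m\<bar>"
    unfolding central_moment_def by (rule abs_triangle_ineq)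
  also have "\<dots> = p * (1 - p) ^ m + (1 - p) * p ^ m"
    using p_pos p_less_1 by (simp add: abs_mult power_abs)
  also have "\<dots> \<le> p * (1 - p) ^ 2 + (1 - p) * p ^ 2"
    using assms p_pos p_less_1 by (intro add_mono mult_left_mono power_decreasing) auto
  also have "\<dots> = q"
    by (simp add: q_def algebra_simps power2_eq_square)
  finally show ?thesis .
qed

lemma expectation_xi:
  assumes "B \<subseteq> {1..N}"
  shows "measure_pmf.expectation (vertex_pmf N p) (\<lambda>x. xi x B) = of_bool (B = {})"
  using expectation_vertex_pmf_prod[OF assms, where g = "\<lambda>_ b. of_bool b - p" and p = p]
    p_pos p_less_1 finite_subset[OF assms]
  by (simp add: xi_def algebra_simps card_gt_0_iff)

lemma expectation_xi_prod:
  assumes "finite J" "\<And>i. i \<in> J \<Longrightarrow> B i \<subseteq> {1..N}"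
  shows "measure_pmf.expectation (vertex_pmf N p) (\<lambda>x. \<Prod>i\<in>J. xi x (B i))
       = (\<Prod>v\<in>{1..N}. central_moment (card {i\<in>J. v \<in> B i}))"
proof -
  have "(\<Prod>i\<in>J. xi x (B i)) = (\<Prod>v\<in>{1..N}. (of_bool (x v) - p) ^ card {i\<in>J. v \<in> B i})" for x
  proof -
    have "(\<Prod>i\<in>J. xi x (B i)) = (\<Prod>i\<in>J. \<Prod>v\<in>{v\<in>{1..N}. v \<in> B i}. of_bool (x v) - p)"
      unfolding xi_def using assms(2) by (intro prod.cong refl) force+
    also have "\<dots> = (\<Prod>v\<in>{1..N}. \<Prod>i\<in>{i\<in>J. v \<in> B i}. of_bool (x v) - p)"
      by (rule prod.swap_restrict) (simp_all add: assms(1))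
    finally show ?thesis by simp
  qed
  then show ?thesis
    using expectation_vertex_pmf_prod[of "{1..N}" N p "\<lambda>v b. (of_bool b - p) ^ card {i\<in>J. v \<in> B i}"]
      p_pos p_less_1 by (simp add: central_moment_def)
qed

lemma abs_prod_central_moment_le:
  assumes "\<And>i. i \<in> J \<Longrightarrow> B i \<subseteq> {1..N}"
    and "\<And>v. v \<in> \<Union>(B ` J) \<Longrightarrow> 2 \<le> card {i\<in>J. v \<in> B i}"
  shows "\<bar>\<Prod>v\<in>{1..N}. central_moment (card {i\<in>J. v \<in> B i})\<bar> \<le> q ^ card (\<Union>(B ` J))"
proof -
  have "\<bar>\<Prod>v\<in>{1..N}. central_moment (card {i\<in>J. v \<in> B i})\<bar>
      \<le> (\<Prod>v\<in>{1..N}. if v \<in> \<Union>(B ` J) then q else 1)"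
    unfolding abs_prod
  proof (intro prod_mono conjI abs_ge_zero)
    fix v
    show "\<bar>central_moment (card {i\<in>J. v \<in> B i})\<bar> \<le> (if v \<in> \<Union>(B ` J) then q else 1)"
    proof (cases "v \<in> \<Union>(B ` J)")
      case False
      then have "card {i\<in>J. v \<in> B i} = 0"
        by (simp only: card_eq_0_iff) blast
      then show ?thesis using False by (simp add: central_moment_0)
    qed (simp add: assms(2) abs_central_moment_le)
  qed
  also have "\<dots> = q ^ card (\<Union>(B ` J))"
    using assms(1) by (subst prod.mono_neutral_cong_right[of _ "\<Union>(B ` J)" _ "\<lambda>_. q"]) auto
  finally show ?thesis .
qed

lemma abs_expectation_xi_prod_le:
  assumes "finite J" "\<And>i. i \<in> J \<Longrightarrow> B i \<subseteq> {1..N}" "\<And>i. i \<in> J \<Longrightarrow> B i \<noteq> {}"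
  shows "\<bar>measure_pmf.expectation (vertex_pmf N p) (\<lambda>x. \<Prod>i\<in>J. xi x (B i))\<bar>
    \<le> of_bool (linked_family J {} B) * q ^ card (\<Union>(B ` J))"
proof (cases "\<exists>v\<in>{1..N}. card {i\<in>J. v \<in> B i} = 1")
  case True
  then obtain v where "v \<in> {1..N}" "card {i\<in>J. v \<in> B i} = 1" by blast
  then have "(\<Prod>v\<in>{1..N}. central_moment (card {i\<in>J. v \<in> B i})) = 0"
    using central_moment_1 by (intro prod_zero bexI[of _ v]) auto
  then show ?thesis
    by (simp add: expectation_xi_prod[OF assms(1,2)] q_nonneg del: prod_zero_iff)
next
  case False
  have twice: "2 \<le> card {i\<in>J. v \<in> B i}" if "j \<in> J" "v \<in> B j" for j v
  proof -
    have "card {i\<in>J. v \<in> B i} \<noteq> 0" using that assms(1) by (auto simp: card_eq_0_iff)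
    moreover have "card {i\<in>J. v \<in> B i} \<noteq> 1" using False that assms(2) by blast
    ultimately show ?thesis by linarith
  qed
  then have "linked_family J {} B"
    by (intro linked_family_if_covered_twice assms(3))
  moreover have "\<bar>\<Prod>v\<in>{1..N}. central_moment (card {i\<in>J. v \<in> B i})\<bar> \<le> q ^ card (\<Union>(B ` J))"
    by (intro abs_prod_central_moment_le assms(2)) (auto intro: twice)
  ultimately show ?thesis
    by (simp add: expectation_xi_prod[OF assms(1,2)])
qed

lemma xi_eq_prod_power:
  assumes "B \<subseteq> {1..N}"
  shows "xi x B = (\<Prod>v\<in>{1..N}. (of_bool (x v) - p) ^ of_bool (v \<in> B))"
  unfolding xi_def using assms by (intro prod.mono_neutral_cong_left) auto

lemma expectation_xi_mult:
  assumes "B1 \<subseteq> {1..N}" "B2 \<subseteq> {1..N}"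
  shows "measure_pmf.expectation (vertex_pmf N p) (\<lambda>x. xi x B1 * xi x B2) = of_bool (B1 = B2) * q ^ card B1"
proof -
  let ?k = "\<lambda>v. of_bool (v \<in> B1) + of_bool (v \<in> B2) :: nat"
  have "xi x B1 * xi x B2 = (\<Prod>v\<in>{1..N}. (of_bool (x v) - p) ^ ?k v)" for x
    by (simp add: xi_eq_prod_power[OF assms(1)] xi_eq_prod_power[OF assms(2)] power_add prod.distrib)
  then have E: "measure_pmf.expectation (vertex_pmf N p) (\<lambda>x. xi x B1 * xi x B2)
      = (\<Prod>v\<in>{1..N}. central_moment (?k v))"
    using expectation_vertex_pmf_prod[where W = "{1..N}" and g = "\<lambda>v b. (of_bool b - p) ^ ?k v" and p = p]
      p_pos p_less_1 by (simp add: central_moment_def)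
  show ?thesis
  proof (cases "B1 = B2")
    case True
    have "(\<Prod>v\<in>{1..N}. central_moment (?k v)) = (\<Prod>v\<in>{1..N}. if v \<in> B1 then q else 1)"
      using True by (intro prod.cong refl) (simp add: central_moment_0 central_moment_2[unfolded numeral_2_eq_2])
    also have "\<dots> = q ^ card B1"
      using assms(1) by (subst prod.If_cases) (auto simp: Int_absorb1)
    finally show ?thesis using E True by simp
  next
    case False
    then obtain v where "v \<in> B1 - B2 \<or> v \<in> B2 - B1" by blast
    then have "v \<in> {1..N}" "?k v = 1" using assms by auto
    then have "(\<Prod>v\<in>{1..N}. central_moment (?k v)) = 0"
      using central_moment_1 by (intro prod_zero bexI[of _ v]) auto
    then show ?thesis using E False by simp
  qed
qed

lemma expectation_power_sum_xi:
  assumes "finite P"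
  shows "measure_pmf.expectation (vertex_pmf N p) (\<lambda>x. (\<Sum>B\<in>P. a B * xi x B) ^ R)
    = (\<Sum>F\<in>{..<R} \<rightarrow>\<^sub>E P. (\<Prod>i<R. a (F i)) *
         measure_pmf.expectation (vertex_pmf N p) (\<lambda>x. \<Prod>i<R. xi x (F i)))"
proof -
  have "(\<Sum>B\<in>P. a B * xi x B) ^ R = (\<Sum>F\<in>{..<R} \<rightarrow>\<^sub>E P. (\<Prod>i<R. a (F i)) * (\<Prod>i<R. xi x (F i)))" for x
    using prod_sum_PiE[of "{..<R}" "\<lambda>_. P" "\<lambda>_ B. a B * xi x B"] assms by (simp add: prod.distrib)
  then show ?thesis
    by (simp add: expectation_vertex_pmf_sum)
qed

end

section \<open>Centred subgraph counts\<close>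

locale subgraph_count = bernoulli_labels +
  fixes h :: nat
begin

definition small_sets :: "nat set set" where
  "small_sets = {B. B \<noteq> {} \<and> B \<subseteq> {1..N} \<and> card B \<le> h}"

definition xi_coef :: "((nat \<Rightarrow> nat) \<Rightarrow> real) \<Rightarrow> nat set \<Rightarrow> real" where
  "xi_coef c B = p ^ (h - card B) * (\<Sum>s\<in>{s\<in>tuples h N. B \<subseteq> s ` {..<h}}. c s)"

lemma finite_tuples: "finite (tuples h N)"
  by (rule finite_subset[of _ "{..<h} \<rightarrow>\<^sub>E {1..N}"]) (auto simp: tuples_def finite_PiE)

lemma tuple_image_subset: "s \<in> tuples h N \<Longrightarrow> s ` {..<h} \<subseteq> {1..N}"
  by (auto simp: tuples_def)

lemma card_tuple_image: "s \<in> tuples h N \<Longrightarrow> card (s ` {..<h}) = h"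
  by (simp add: tuples_def card_image)

lemma finite_small_sets: "finite small_sets"
  by (rule finite_subset[of _ "Pow {1..N}"]) (auto simp: small_sets_def)

lemma small_subsets_of_tuple:
  assumes "s \<in> tuples h N"
  shows "{B\<in>small_sets. B \<subseteq> s ` {..<h}} = Pow (s ` {..<h}) - {{}}"
proof -
  have "B \<subseteq> {1..N} \<and> card B \<le> h" if "B \<subseteq> s ` {..<h}" for B
    using that tuple_image_subset[OF assms] card_mono[OF _ that] card_tuple_image[OF assms] by auto
  then show ?thesis by (auto simp: small_sets_def)
qed

lemma X_tuple_eq_sum_xi:
  assumes "s \<in> tuples h N"
  shows "X_tuple h x s = p ^ h + (\<Sum>B\<in>{B\<in>small_sets. B \<subseteq> s ` {..<h}}. p ^ (h - card B) * xi x B)"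
proof -
  let ?S = "s ` {..<h}"
  have "X_tuple h x s = (\<Prod>v\<in>?S. (of_bool (x v) - p) + p)"
    using assms by (simp add: X_tuple_def tuples_def prod.reindex)
  also have "\<dots> = (\<Sum>B\<in>Pow ?S. xi x B * p ^ card (?S - B))"
    using prod_add[of ?S "\<lambda>v. of_bool (x v) - p" "\<lambda>_. p"] by (simp add: xi_def)
  also have "\<dots> = (\<Sum>B\<in>Pow ?S. p ^ (h - card B) * xi x B)"
    using card_tuple_image[OF assms] by (intro sum.cong refl) (auto simp: card_Diff_subset finite_subset)
  also have "\<dots> = p ^ h + (\<Sum>B\<in>Pow ?S - {{}}. p ^ (h - card B) * xi x B)"
    by (subst sum.remove[of _ "{}"]) (auto simp: xi_def)
  finally show ?thesis
    by (simp only: small_subsets_of_tuple[OF assms])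
qed

lemma expectation_X_tuple:
  assumes "s \<in> tuples h N"
  shows "measure_pmf.expectation (vertex_pmf N p) (\<lambda>x. X_tuple h x s) = p ^ h"
proof -
  have "measure_pmf.expectation (vertex_pmf N p) (\<lambda>x. xi x B) = 0"
    if "B \<in> {B\<in>small_sets. B \<subseteq> s ` {..<h}}" for B
    using that by (simp add: expectation_xi small_sets_def)
  then show ?thesis
    by (simp add: X_tuple_eq_sum_xi[OF assms] expectation_vertex_pmf_sum integrable_vertex_pmf)
qed

lemma centered_count_eq:
  "(\<Sum>s\<in>tuples h N. c s * X_tuple h x s)
     - measure_pmf.expectation (vertex_pmf N p) (\<lambda>x. \<Sum>s\<in>tuples h N. c s * X_tuple h x s)
   = (\<Sum>B\<in>small_sets. xi_coef c B * xi x B)"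
proof -
  have "(\<Sum>s\<in>tuples h N. c s * X_tuple h x s)
     - measure_pmf.expectation (vertex_pmf N p) (\<lambda>x. \<Sum>s\<in>tuples h N. c s * X_tuple h x s)
      = (\<Sum>s\<in>tuples h N. c s * (X_tuple h x s - p ^ h))"
  proof -
    have "measure_pmf.expectation (vertex_pmf N p) (\<lambda>x. \<Sum>s\<in>tuples h N. c s * X_tuple h x s)
        = (\<Sum>s\<in>tuples h N. c s * p ^ h)"
      unfolding expectation_vertex_pmf_sum by (intro sum.cong refl) (simp add: expectation_X_tuple)
    then show ?thesis by (simp add: right_diff_distrib sum_subtractf)
  qed
  also have "\<dots> = (\<Sum>s\<in>tuples h N. \<Sum>B\<in>{B\<in>small_sets. B \<subseteq> s ` {..<h}}. c s * p ^ (h - card B) * xi x B)"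
    by (intro sum.cong refl) (simp add: X_tuple_eq_sum_xi sum_distrib_left mult.assoc)
  also have "\<dots> = (\<Sum>B\<in>small_sets. \<Sum>s\<in>{s\<in>tuples h N. B \<subseteq> s ` {..<h}}. c s * p ^ (h - card B) * xi x B)"
    by (rule sum.swap_restrict[OF finite_tuples finite_small_sets])
  also have "\<dots> = (\<Sum>B\<in>small_sets. xi_coef c B * xi x B)"
    by (simp add: xi_coef_def sum_distrib_left sum_distrib_right mult_ac)
  finally show ?thesis .
qed

lemma xi_coef_mult_q_power_le:
  assumes "B \<in> small_sets" "I \<subseteq> B" "\<And>s. s \<in> tuples h N \<Longrightarrow> 0 \<le> c s"
  shows "xi_coef c B * q ^ card (B - I) \<le> p ^ (h - card I) * (\<Sum>s\<in>{s\<in>tuples h N. B \<subseteq> s ` {..<h}}. c s)"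
proof -
  have B: "finite B" "card B \<le> h"
    using assms(1) by (auto simp: small_sets_def intro: finite_subset)
  let ?S = "\<Sum>s\<in>{s\<in>tuples h N. B \<subseteq> s ` {..<h}}. c s"
  have "p ^ (h - card B) * q ^ card (B - I) \<le> p ^ (h - card B) * p ^ card (B - I)"
    using p_pos q_nonneg q_le_p by (intro mult_left_mono power_mono) auto
  also have "\<dots> = p ^ (h - card I)"
    using B card_mono[OF B(1) assms(2)] finite_subset[OF assms(2) B(1)]
    by (simp add: card_Diff_subset[OF _ assms(2)] flip: power_add)
  finally have "p ^ (h - card B) * q ^ card (B - I) * ?S \<le> p ^ (h - card I) * ?S"
    using assms(3) by (intro mult_right_mono sum_nonneg) auto
  then show ?thesis
    by (simp add: xi_coef_def mult_ac)
qed

lemma sum_small_supersets_le: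
  fixes c :: "(nat \<Rightarrow> nat) \<Rightarrow> real"
  assumes "\<And>s. s \<in> tuples h N \<Longrightarrow> 0 \<le> c s"
  shows "(\<Sum>B\<in>{B\<in>small_sets. I \<subseteq> B}. \<Sum>s\<in>{s\<in>tuples h N. B \<subseteq> s ` {..<h}}. c s)
    \<le> 2 ^ h * (\<Sum>s\<in>{s\<in>tuples h N. I \<subseteq> s ` {..<h}}. c s)"
proof -
  have "(\<Sum>B\<in>{B\<in>small_sets. I \<subseteq> B}. \<Sum>s\<in>{s\<in>tuples h N. B \<subseteq> s ` {..<h}}. c s)
      = (\<Sum>s\<in>tuples h N. \<Sum>B\<in>{B\<in>{B\<in>small_sets. I \<subseteq> B}. B \<subseteq> s ` {..<h}}. c s)"
    by (rule sum.swap_restrict[symmetric]) (simp_all add: finite_tuples finite_small_sets)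
  also have "\<dots> \<le> (\<Sum>s\<in>tuples h N. of_bool (I \<subseteq> s ` {..<h}) * (2 ^ h * c s))"
  proof (rule sum_mono)
    fix s assume s: "s \<in> tuples h N"
    have "card {B\<in>{B\<in>small_sets. I \<subseteq> B}. B \<subseteq> s ` {..<h}} \<le> card (Pow (s ` {..<h}))"
      by (rule card_mono) auto
    then have card_le: "card {B\<in>{B\<in>small_sets. I \<subseteq> B}. B \<subseteq> s ` {..<h}} \<le> (2::real) ^ h"
      using card_tuple_image[OF s] by (simp add: card_Pow flip: of_nat_power)
    then show "(\<Sum>B\<in>{B\<in>{B\<in>small_sets. I \<subseteq> B}. B \<subseteq> s ` {..<h}}. c s)
        \<le> of_bool (I \<subseteq> s ` {..<h}) * (2 ^ h * c s)"
    proof (cases "I \<subseteq> s ` {..<h}")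
      case True
      then show ?thesis using card_le assms[OF s] by (simp add: mult_right_mono)
    next
      case False
      then have "{B\<in>{B\<in>small_sets. I \<subseteq> B}. B \<subseteq> s ` {..<h}} = {}" by blast
      then show ?thesis using False by (simp only: sum.empty) simp
    qed
  qed
  also have "\<dots> = 2 ^ h * (\<Sum>s\<in>{s\<in>tuples h N. I \<subseteq> s ` {..<h}}. c s)"
    by (simp add: finite_tuples Collect_conj_eq sum_distrib_left)
  finally show ?thesis .
qed

lemma sum_supersets_xi_coef_le:
  assumes "\<And>s. s \<in> tuples h N \<Longrightarrow> 0 \<le> c s"
  shows "(\<Sum>B\<in>{B\<in>small_sets. I \<subseteq> B}. xi_coef c B * q ^ card (B - I)) \<le> 2 ^ h * xi_coef c I"
proof -
  have "(\<Sum>B\<in>{B\<in>small_sets. I \<subseteq> B}. xi_coef c B * q ^ card (B - I))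
      \<le> (\<Sum>B\<in>{B\<in>small_sets. I \<subseteq> B}. p ^ (h - card I) * (\<Sum>s\<in>{s\<in>tuples h N. B \<subseteq> s ` {..<h}}. c s))"
    using xi_coef_mult_q_power_le assms by (intro sum_mono) auto
  also have "\<dots> = p ^ (h - card I) *
      (\<Sum>B\<in>{B\<in>small_sets. I \<subseteq> B}. \<Sum>s\<in>{s\<in>tuples h N. B \<subseteq> s ` {..<h}}. c s)"
    by (rule sum_distrib_left[symmetric])
  also have "\<dots> \<le> p ^ (h - card I) * (2 ^ h * (\<Sum>s\<in>{s\<in>tuples h N. I \<subseteq> s ` {..<h}}. c s))"
    using p_pos by (intro mult_left_mono sum_small_supersets_le assms) auto
  also have "\<dots> = 2 ^ h * xi_coef c I"
    by (simp add: xi_coef_def)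
  finally show ?thesis .
qed

lemma xi_coef_eq_0_if_card_gt:
  assumes "h < card I"
  shows "xi_coef c I = 0"
proof -
  have "{s\<in>tuples h N. I \<subseteq> s ` {..<h}} = {}"
    using assms card_tuple_image card_mono[OF finite_imageI[of "{..<h}"]] by fastforce
  then show ?thesis unfolding xi_coef_def by (simp only: sum.empty mult_zero_right)
qed

end

section \<open>The truncated count\<close>

locale truncated_count = subgraph_count +
  fixes EH :: "nat \<Rightarrow> nat \<Rightarrow> bool" and a :: "nat \<Rightarrow> nat \<Rightarrow> bool" and M :: real
  assumes M_pos: "0 < M" and variance_pos: "0 < varT h EH N a p"
begin

definition count_weight :: "(nat \<Rightarrow> nat) \<Rightarrow> real" where
  "count_weight s = hom_weight h EH a s / aut_card h EH"

definition trunc_weight :: "(nat \<Rightarrow> nat) \<Rightarrow> real" where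
  "trunc_weight s = count_weight s * of_bool (good_tuple M h EH N a p s)"

lemma count_weight_nonneg: "0 \<le> count_weight s"
  unfolding count_weight_def hom_weight_def by (intro divide_nonneg_nonneg prod_nonneg) auto

lemma trunc_weight_nonneg: "0 \<le> trunc_weight s"
  by (simp add: trunc_weight_def count_weight_nonneg)

lemma trunc_weight_le: "trunc_weight s \<le> count_weight s"
  by (simp add: trunc_weight_def count_weight_nonneg)

lemma T_count_eq: "T_count h EH N a = (\<lambda>x. \<Sum>s\<in>tuples h N. count_weight s * X_tuple h x s)"
  by (auto simp: T_count_def count_weight_def sum_distrib_left)

lemma T_trunc_eq: "T_trunc M h EH N a p = (\<lambda>x. \<Sum>s\<in>tuples h N. trunc_weight s * X_tuple h x s)"
  by (auto simp: T_trunc_def trunc_weight_def count_weight_def sum_distrib_left mult_ac)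

lemma xi_coef_count_weight: "xi_coef count_weight I = p ^ (h - card I) * t_H h EH N a I"
  by (simp add: xi_coef_def t_H_def count_weight_def sum_divide_distrib)

lemma variance_eq: "varT h EH N a p = (\<Sum>B\<in>small_sets. q ^ card B * (xi_coef count_weight B)\<^sup>2)"
proof -
  let ?E = "measure_pmf.expectation (vertex_pmf N p)"
  have "varT h EH N a p = ?E (\<lambda>x. (\<Sum>B\<in>small_sets. xi_coef count_weight B * xi x B)\<^sup>2)"
    unfolding varT_def T_count_eq centered_count_eq ..
  also have "\<dots> = (\<Sum>B\<in>small_sets. \<Sum>B'\<in>small_sets.
      xi_coef count_weight B * xi_coef count_weight B' * ?E (\<lambda>x. xi x B * xi x B'))"
  proof -
    have "(\<Sum>B\<in>small_sets. xi_coef count_weight B * xi x B)\<^sup>2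
        = (\<Sum>B\<in>small_sets. \<Sum>B'\<in>small_sets. xi_coef count_weight B * xi_coef count_weight B' * (xi x B * xi x B'))"
      for x by (simp add: power2_eq_square sum_product mult_ac)
    then show ?thesis by (simp add: expectation_vertex_pmf_sum)
  qed
  also have "\<dots> = (\<Sum>B\<in>small_sets. q ^ card B * (xi_coef count_weight B)\<^sup>2)"
  proof (intro sum.cong refl)
    fix B assume "B \<in> small_sets"
    then have "(\<Sum>B'\<in>small_sets. xi_coef count_weight B * xi_coef count_weight B' * ?E (\<lambda>x. xi x B * xi x B'))
        = (\<Sum>B'\<in>small_sets. if B = B' then q ^ card B * (xi_coef count_weight B)\<^sup>2 else 0)"
      by (intro sum.cong refl) (auto simp: expectation_xi_mult small_sets_def power2_eq_square)
    then show "(\<Sum>B'\<in>small_sets. xi_coef count_weight B * xi_coef count_weight B' * ?E (\<lambda>x. xi x B * xi x B'))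
        = q ^ card B * (xi_coef count_weight B)\<^sup>2"
      using \<open>B \<in> small_sets\<close> by (simp add: finite_small_sets)
  qed
  finally show ?thesis .
qed

lemma xi_coef_trunc_le_xi_coef_count: "xi_coef trunc_weight I \<le> xi_coef count_weight I"
  unfolding xi_coef_def using p_pos by (intro mult_left_mono sum_mono trunc_weight_le) auto

lemma xi_coef_trunc_nonneg: "0 \<le> xi_coef trunc_weight I"
  unfolding xi_coef_def using p_pos by (intro mult_nonneg_nonneg sum_nonneg trunc_weight_nonneg) auto

lemma xi_coef_count_sq_le:
  assumes "I \<noteq> {}" "s \<in> tuples h N" "I \<subseteq> s ` {..<h}" "good_tuple M h EH N a p s"
  shows "(xi_coef count_weight I)\<^sup>2 \<le> M * varT h EH N a p"
proof -
  let ?y = "(p ^ (h - card I))\<^sup>2"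
  have "card I \<le> h"
    using card_mono[OF finite_imageI assms(3)] card_tuple_image[OF assms(2)] by simp
  then have "2 * int (card I) - 2 * int h = - int ((h - card I) * 2)"
    by simp
  then have "p powi (2 * int (card I) - 2 * int h) = inverse ?y"
    by (simp only: power_int_minus power_int_of_nat power_mult)
  moreover have "\<not> cond_C M h EH N a p I"
    using assms(1,3,4) unfolding good_tuple_def by blast
  ultimately have "(t_H h EH N a I)\<^sup>2 \<le> M * inverse ?y * varT h EH N a p"
    by (simp add: cond_C_def not_less)
  then have "?y * (t_H h EH N a I)\<^sup>2 \<le> ?y * (M * inverse ?y * varT h EH N a p)"
    by (rule mult_left_mono) simp
  also have "\<dots> = M * varT h EH N a p"
    using p_pos by simp
  finally show ?thesis
    by (simp add: xi_coef_count_weight power_mult_distrib)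
qed

lemma xi_coef_trunc_le_sqrt:
  assumes "I \<noteq> {}"
  shows "xi_coef trunc_weight I \<le> sqrt (M * varT h EH N a p)"
proof (cases "\<exists>s\<in>tuples h N. I \<subseteq> s ` {..<h} \<and> good_tuple M h EH N a p s")
  case True
  then obtain s where "s \<in> tuples h N" "I \<subseteq> s ` {..<h}" "good_tuple M h EH N a p s" by blast
  then have "(xi_coef count_weight I)\<^sup>2 \<le> M * varT h EH N a p"
    by (rule xi_coef_count_sq_le[OF assms])
  moreover have "(xi_coef trunc_weight I)\<^sup>2 \<le> (xi_coef count_weight I)\<^sup>2"
    by (intro power_mono xi_coef_trunc_le_xi_coef_count xi_coef_trunc_nonneg)
  ultimately show ?thesis
    by (intro real_le_rsqrt) linarith
next
  case False
  then have "xi_coef trunc_weight I = 0"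
    unfolding xi_coef_def trunc_weight_def by (auto intro!: sum.neutral)
  then show ?thesis using M_pos variance_pos by simp
qed

lemma sum_sq_supersets_xi_coef_trunc_le:
  "(\<Sum>I\<in>Pow {1..N} - {{}}. q ^ card I *
      (\<Sum>B\<in>{B\<in>small_sets. I \<subseteq> B}. xi_coef trunc_weight B * q ^ card (B - I))\<^sup>2)
    \<le> 4 ^ h * varT h EH N a p"
proof -
  have "(\<Sum>I\<in>Pow {1..N} - {{}}. q ^ card I *
      (\<Sum>B\<in>{B\<in>small_sets. I \<subseteq> B}. xi_coef trunc_weight B * q ^ card (B - I))\<^sup>2)
    \<le> (\<Sum>I\<in>Pow {1..N} - {{}}. q ^ card I * (2 ^ h * xi_coef count_weight I)\<^sup>2)"
  proof (intro sum_mono mult_left_mono power_mono q_nonneg zero_le_power)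
    fix I
    show "0 \<le> (\<Sum>B\<in>{B\<in>small_sets. I \<subseteq> B}. xi_coef trunc_weight B * q ^ card (B - I))"
      using q_nonneg xi_coef_trunc_nonneg by (intro sum_nonneg) auto
    show "(\<Sum>B\<in>{B\<in>small_sets. I \<subseteq> B}. xi_coef trunc_weight B * q ^ card (B - I)) \<le> 2 ^ h * xi_coef count_weight I"
      by (rule order_trans[OF sum_supersets_xi_coef_le[where c = trunc_weight and I = I, OF trunc_weight_nonneg]
            mult_left_mono[OF xi_coef_trunc_le_xi_coef_count]]) simp
  qed
  also have "\<dots> = 4 ^ h * (\<Sum>I\<in>Pow {1..N} - {{}}. q ^ card I * (xi_coef count_weight I)\<^sup>2)"
    by (simp add: sum_distrib_left power2_two_power_mult mult_ac)
  also have "(\<Sum>I\<in>Pow {1..N} - {{}}. q ^ card I * (xi_coef count_weight I)\<^sup>2) = varT h EH N a p"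
    unfolding variance_eq
  proof (rule sum.mono_neutral_right)
    show "\<forall>I\<in>Pow {1..N} - {{}} - small_sets. q ^ card I * (xi_coef count_weight I)\<^sup>2 = 0"
    proof
      fix I assume "I \<in> Pow {1..N} - {{}} - small_sets"
      then have "h < card I" by (auto simp: small_sets_def)
      then show "q ^ card I * (xi_coef count_weight I)\<^sup>2 = 0" by (simp add: xi_coef_eq_0_if_card_gt)
    qed
  qed (auto simp: small_sets_def)
  finally show ?thesis .
qed

lemma overlap_weights_trunc:
  "overlap_weights {1..N} small_sets (xi_coef trunc_weight) q
     (2 ^ h * sqrt (M * varT h EH N a p)) (4 ^ h * varT h EH N a p) h"
proof (unfold_locales)
  fix I :: "nat set" assume "I \<noteq> {}"
  then show "(\<Sum>B\<in>{B\<in>small_sets. I \<subseteq> B}. xi_coef trunc_weight B * q ^ card (B - I))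
      \<le> 2 ^ h * sqrt (M * varT h EH N a p)"
    by (rule order_trans[OF sum_supersets_xi_coef_le[where c = trunc_weight and I = I, OF trunc_weight_nonneg]
          mult_left_mono[OF xi_coef_trunc_le_sqrt]]) simp_all
next
  show "0 \<le> 2 ^ h * sqrt (M * varT h EH N a p)"
    using M_pos variance_pos by simp
next
  show "small_sets \<subseteq> Pow {1..N}" by (auto simp: small_sets_def)
next
  show "B \<in> small_sets \<Longrightarrow> card B \<le> h" for B by (simp add: small_sets_def)
qed (rule q_nonneg xi_coef_trunc_nonneg sum_sq_supersets_xi_coef_trunc_le | simp)+

sublocale trunc: overlap_weights "{1..N}" small_sets "xi_coef trunc_weight" q
  "2 ^ h * sqrt (M * varT h EH N a p)" "4 ^ h * varT h EH N a p" h
  by (rule overlap_weights_trunc)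

lemma abs_moment_centered_trunc_le:
  "\<bar>measure_pmf.expectation (vertex_pmf N p) (\<lambda>x. (T_trunc M h EH N a p x
      - measure_pmf.expectation (vertex_pmf N p) (T_trunc M h EH N a p)) ^ R)\<bar>
    \<le> trunc.linked_sum {..<R} {}"
proof -
  let ?E = "measure_pmf.expectation (vertex_pmf N p)"
  have moment_eq: "?E (\<lambda>x. (T_trunc M h EH N a p x - ?E (T_trunc M h EH N a p)) ^ R)
      = (\<Sum>F\<in>{..<R} \<rightarrow>\<^sub>E small_sets. (\<Prod>i<R. xi_coef trunc_weight (F i)) * ?E (\<lambda>x. \<Prod>i<R. xi x (F i)))"
    unfolding T_trunc_eq centered_count_eq by (rule expectation_power_sum_xi[OF finite_small_sets])
  have "\<bar>\<Sum>F\<in>{..<R} \<rightarrow>\<^sub>E small_sets. (\<Prod>i<R. xi_coef trunc_weight (F i)) * ?E (\<lambda>x. \<Prod>i<R. xi x (F i))\<bar>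
      \<le> (\<Sum>F\<in>{..<R} \<rightarrow>\<^sub>E small_sets. trunc.family_weight {..<R} {} F)"
  proof (rule order_trans[OF sum_abs sum_mono])
    fix F assume F: "F \<in> {..<R} \<rightarrow>\<^sub>E small_sets"
    then have "\<bar>?E (\<lambda>x. \<Prod>i<R. xi x (F i))\<bar>
        \<le> of_bool (linked_family {..<R} {} F) * q ^ card (\<Union>(F ` {..<R}))"
      by (intro abs_expectation_xi_prod_le) (auto simp: small_sets_def)
    moreover have "0 \<le> (\<Prod>i<R. xi_coef trunc_weight (F i))"
      by (intro prod_nonneg xi_coef_trunc_nonneg)
    ultimately have "\<bar>(\<Prod>i<R. xi_coef trunc_weight (F i)) * ?E (\<lambda>x. \<Prod>i<R. xi x (F i))\<bar>
        \<le> (\<Prod>i<R. xi_coef trunc_weight (F i)) *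
           (of_bool (linked_family {..<R} {} F) * q ^ card (\<Union>(F ` {..<R})))"
      by (simp add: abs_mult mult_left_mono)
    then show "\<bar>(\<Prod>i<R. xi_coef trunc_weight (F i)) * ?E (\<lambda>x. \<Prod>i<R. xi x (F i))\<bar>
        \<le> trunc.family_weight {..<R} {} F"
      by (simp add: trunc.family_weight_def trunc.plain_weight_def mult_ac)
  qed
  then show ?thesis
    unfolding moment_eq trunc.linked_sum_def .
qed

lemma abs_moment_normalized_trunc_le:
  "\<bar>measure_pmf.expectation (vertex_pmf N p) (\<lambda>x. ((T_trunc M h EH N a p x
      - measure_pmf.expectation (vertex_pmf N p) (T_trunc M h EH N a p)) / sqrt (varT h EH N a p)) ^ R)\<bar>
    \<le> linked_sum_bound h R 0 * (2 ^ h * sqrt (max M 1)) ^ R"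
proof -
  let ?E = "measure_pmf.expectation (vertex_pmf N p)"
  let ?X = "\<lambda>x. T_trunc M h EH N a p x - ?E (T_trunc M h EH N a p)"
  let ?s = "sqrt (varT h EH N a p)"
  define \<kappa> where "\<kappa> = 2 ^ h * sqrt (max M 1) * ?s"
  have "0 \<le> \<kappa>"
    using variance_pos by (simp add: \<kappa>_def)
  moreover have "2 ^ h * sqrt (M * varT h EH N a p) \<le> \<kappa>"
    unfolding \<kappa>_def using variance_pos by (simp add: real_sqrt_mult mult_right_mono)
  moreover have "4 ^ h * varT h EH N a p \<le> \<kappa>\<^sup>2"
  proof -
    have "\<kappa>\<^sup>2 = 4 ^ h * (max M 1 * varT h EH N a p)"
      unfolding \<kappa>_def mult.assoc power2_two_power_mult using variance_pos by (simp add: power_mult_distrib)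
    then show ?thesis
      using variance_pos by (simp add: mult_right_mono)
  qed
  ultimately have "trunc.linked_sum {..<R} {} \<le> linked_sum_bound h R 0 * \<kappa> ^ R"
    using trunc.linked_sum_le[of \<kappa> "{..<R}" "{}" 0] by simp
  with abs_moment_centered_trunc_le have "\<bar>?E (\<lambda>x. ?X x ^ R)\<bar> \<le> linked_sum_bound h R 0 * \<kappa> ^ R"
    by (rule order_trans)
  have "\<bar>?E (\<lambda>x. (?X x / ?s) ^ R)\<bar> = \<bar>?E (\<lambda>x. ?X x ^ R)\<bar> / ?s ^ R"
    using variance_pos by (simp add: power_divide)
  also have "\<dots> \<le> linked_sum_bound h R 0 * \<kappa> ^ R / ?s ^ R"
    using \<open>\<bar>?E (\<lambda>x. ?X x ^ R)\<bar> \<le> linked_sum_bound h R 0 * \<kappa> ^ R\<close> variance_pos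
    by (intro divide_right_mono) simp_all
  also have "\<dots> = linked_sum_bound h R 0 * (2 ^ h * sqrt (max M 1)) ^ R"
    using variance_pos by (simp add: \<kappa>_def power_mult_distrib)
  finally show ?thesis .
qed

end

theorem lemma5p3:
  fixes h :: nat and EH :: "nat \<Rightarrow> nat \<Rightarrow> bool" and M :: real and R :: nat
  assumes "connected_graph h EH" and "M > 0" and "R \<ge> 1"
  shows "\<exists>C::real. \<forall>(N::nat \<Rightarrow> nat) (a::nat \<Rightarrow> nat \<Rightarrow> nat \<Rightarrow> bool) (p::nat \<Rightarrow> real).
     (\<forall>n. simple_graph {1..N n} (a n)) \<longrightarrow>
     (\<forall>n. 0 < p n \<and> p n < 1) \<longrightarrow>
     limsup (\<lambda>n. ereal (p n)) < 1 \<longrightarrow>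
     (\<forall>n. varT h EH (N n) (a n) (p n) > 0) \<longrightarrow>
     limsup (\<lambda>n. ereal \<bar>measure_pmf.expectation (vertex_pmf (N n) (p n))
        (\<lambda>x. ((T_trunc M h EH (N n) (a n) (p n) x
               - measure_pmf.expectation (vertex_pmf (N n) (p n)) (T_trunc M h EH (N n) (a n) (p n)))
              / sqrt (varT h EH (N n) (a n) (p n))) ^ R)\<bar>) \<le> ereal C"
proof (rule exI[of _ "linked_sum_bound h R 0 * (2 ^ h * sqrt (max M 1)) ^ R"], intro allI impI)
  \<comment> \<open>The bound holds for every n.\<close>
  fix N :: "nat \<Rightarrow> nat" and a :: "nat \<Rightarrow> nat \<Rightarrow> nat \<Rightarrow> bool" and p :: "nat \<Rightarrow> real"
  assume p: "\<forall>n. 0 < p n \<and> p n < 1" and variance: "\<forall>n. varT h EH (N n) (a n) (p n) > 0"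
  have "truncated_count (N n) (p n) h EH (a n) M" for n
    using p variance assms(2) by unfold_locales auto
  then show "limsup (\<lambda>n. ereal \<bar>measure_pmf.expectation (vertex_pmf (N n) (p n))
        (\<lambda>x. ((T_trunc M h EH (N n) (a n) (p n) x
               - measure_pmf.expectation (vertex_pmf (N n) (p n)) (T_trunc M h EH (N n) (a n) (p n)))
              / sqrt (varT h EH (N n) (a n) (p n))) ^ R)\<bar>)
      \<le> ereal (linked_sum_bound h R 0 * (2 ^ h * sqrt (max M 1)) ^ R)"
    by (intro Limsup_bounded always_eventually allI) (simp add: truncated_count.abs_moment_normalized_trunc_le)
qed

end
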